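(* Let $M$ be a graded $R$-module. The following are equivalent: (1) $qp.Spec_g(M)$ with the quasi-Zariski topology is a $T_0$-space. (2) For all $Q,P\in qp.Spec_g(M)$, if $qp\text{-}V_M^g(Q)=qp\text{-}V_M^g(P)$ then $Q=P$. (3) $|qp.Spec_g^p(M)|\le 1$ for every $p\in Spec_g(R)$. (4) The natural map $\varphi$ is injective.
   Context: $R=\bigoplus_{g\in G}R_g$ is a graded commutative ring with identity graded by a group $G$, $h(R)=\bigcup_g R_g$; $M$ is a graded $R$-module, $h(M)$ its homogeneous elements. $Gr(I)$ is the graded radical of a graded ideal $I$. $Spec_g(R)$: graded prime ideals. $(K:_RM)=\{r: rM\subseteq K\}$. Graded prime submodule: proper graded $P$ with $rm\in P$ ($r\in h(R), m\in h(M)$) implying $m\in P$ or $r\in(P:_RM)$. $Gr_M(K)$: intersection of graded prime submodules containing $K$ ($M$ if none). Graded primeful property of $K$: for each graded prime $p\supseteq(K:_RM)$ there is a graded prime submodule $P\supseteq K$ with $(P:_RM)=p$. Graded quasi-primary submodule: proper graded $Q$ with $rm\in Q$ ($r\in h(R),m\in h(M)$) implying $r\in Gr((Q:_RM))$ or $m\in Gr_M(Q)$. $qp.Spec_g(M)$: graded quasi-primary submodules with the graded primeful property; $qp.Spec_g^p(M)=\{Q\in qp.Spec_g(M): Gr((Q:_RM))=p\}$. $qp\text{-}V_M^g(K)=\{Q\in qp.Spec_g(M): Gr((Q:_RM))\supseteq Gr((K:_RM))\}$; the quasi-Zariski topology has closed sets exactly these. $\overline R=R/\mathrm{Ann}(M)$.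 For $Q\in qp.Spec_g(M)$, $(Gr_M(Q):_RM)=Gr((Q:_RM))$ is a graded prime ideal of $R$ containing $\mathrm{Ann}(M)$; the natural map $\varphi:qp.Spec_g(M)\to Spec_g(\overline R)$ is $\varphi(Q)=(Gr_M(Q):_RM)/\mathrm{Ann}(M)$. *)

theory Defs
  imports Main
begin

text \<open>Gradings are given by families indexed by a group 'g (written additively,
  not assumed commutative).  The ring R is the type 'r (commutative with 1),
  the module M is the whole type 'm with scalar action sm.\<close>

definition finsupp :: "('g \<Rightarrow> 'a::zero) \<Rightarrow> bool" where
  "finsupp c \<longleftrightarrow> finite {g. c g \<noteq> 0}"

definition gsum :: "('g \<Rightarrow> 'a::comm_monoid_add) \<Rightarrow> 'a" where
  "gsum c = (\<Sum>g\<in>{g. c g \<noteq> 0}. c g)"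

definition direct_decomp :: "('g \<Rightarrow> 'a::comm_monoid_add set) \<Rightarrow> bool" where
  "direct_decomp A \<longleftrightarrow>
     (\<forall>x. \<exists>!c. finsupp c \<and> (\<forall>g. c g \<in> A g) \<and> x = gsum c)"

definition add_subgroup :: "'a::ab_group_add set \<Rightarrow> bool" where
  "add_subgroup S \<longleftrightarrow> 0 \<in> S \<and> (\<forall>x\<in>S. \<forall>y\<in>S. x + y \<in> S \<and> x - y \<in> S)"

definition graded_ring :: "('g::group_add \<Rightarrow> 'r::comm_ring_1 set) \<Rightarrow> bool" where
  "graded_ring Rg \<longleftrightarrow>
     (\<forall>g. add_subgroup (Rg g)) \<and>
     (\<forall>g h. \<forall>a\<in>Rg g. \<forall>b\<in>Rg h. a * b \<in> Rg (g + h)) \<and>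
     direct_decomp Rg"

definition module_action :: "('r::comm_ring_1 \<Rightarrow> 'm::ab_group_add \<Rightarrow> 'm) \<Rightarrow> bool" where
  "module_action sm \<longleftrightarrow>
     (\<forall>a b m. sm (a + b) m = sm a m + sm b m) \<and>
     (\<forall>a m n. sm a (m + n) = sm a m + sm a n) \<and>
     (\<forall>a b m. sm (a * b) m = sm a (sm b m)) \<and>
     (\<forall>m. sm 1 m = m)"

definition graded_module ::
  "('g::group_add \<Rightarrow> 'r::comm_ring_1 set) \<Rightarrow> ('g \<Rightarrow> 'm::ab_group_add set)
    \<Rightarrow> ('r \<Rightarrow> 'm \<Rightarrow> 'm) \<Rightarrow> bool" where
  "graded_module Rg Mg sm \<longleftrightarrow>
     graded_ring Rg \<and> module_action sm \<and>
     (\<forall>g. add_subgroup (Mg g)) \<and>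
     (\<forall>g h. \<forall>a\<in>Rg g. \<forall>m\<in>Mg h. sm a m \<in> Mg (g + h)) \<and>
     direct_decomp Mg"

definition hom :: "('g \<Rightarrow> 'a set) \<Rightarrow> 'a set" where
  "hom A = (\<Union>g. A g)"

definition graded_ideal :: "('g \<Rightarrow> 'r::comm_ring_1 set) \<Rightarrow> 'r set \<Rightarrow> bool" where
  "graded_ideal Rg I \<longleftrightarrow>
     add_subgroup I \<and> (\<forall>r. \<forall>x\<in>I. r * x \<in> I) \<and>
     (\<forall>x\<in>I. \<exists>c. finsupp c \<and> (\<forall>g. c g \<in> Rg g \<inter> I) \<and> x = gsum c)"

definition graded_submodule ::
  "('g \<Rightarrow> 'm::ab_group_add set) \<Rightarrow> ('r \<Rightarrow> 'm \<Rightarrow> 'm) \<Rightarrow> 'm set \<Rightarrow> bool" where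
  "graded_submodule Mg sm N \<longleftrightarrow>
     add_subgroup N \<and> (\<forall>r. \<forall>x\<in>N. sm r x \<in> N) \<and>
     (\<forall>x\<in>N. \<exists>c. finsupp c \<and> (\<forall>g. c g \<in> Mg g \<inter> N) \<and> x = gsum c)"

definition graded_radical :: "('g \<Rightarrow> 'r::comm_ring_1 set) \<Rightarrow> 'r set \<Rightarrow> 'r set" where
  "graded_radical Rg I =
     {x. \<exists>c. finsupp c \<and> (\<forall>g. c g \<in> Rg g) \<and> x = gsum c \<and>
            (\<forall>g. \<exists>n>0. c g ^ n \<in> I)}"

definition graded_prime_ideal :: "('g \<Rightarrow> 'r::comm_ring_1 set) \<Rightarrow> 'r set \<Rightarrow> bool" where
  "graded_prime_ideal Rg P \<longleftrightarrow>
     graded_ideal Rg P \<and> P \<noteq> UNIV \<and>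
     (\<forall>a\<in>hom Rg. \<forall>b\<in>hom Rg. a * b \<in> P \<longrightarrow> a \<in> P \<or> b \<in> P)"

definition colon :: "('r \<Rightarrow> 'm \<Rightarrow> 'm) \<Rightarrow> 'm set \<Rightarrow> 'r set" where
  "colon sm K = {r. \<forall>m. sm r m \<in> K}"

definition Ann :: "('r \<Rightarrow> 'm::zero \<Rightarrow> 'm) \<Rightarrow> 'r set" where
  "Ann sm = colon sm {0}"

definition graded_prime_submodule ::
  "('g \<Rightarrow> 'r::comm_ring_1 set) \<Rightarrow> ('g \<Rightarrow> 'm::ab_group_add set)
    \<Rightarrow> ('r \<Rightarrow> 'm \<Rightarrow> 'm) \<Rightarrow> 'm set \<Rightarrow> bool" where
  "graded_prime_submodule Rg Mg sm P \<longleftrightarrow>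
     graded_submodule Mg sm P \<and> P \<noteq> UNIV \<and>
     (\<forall>r\<in>hom Rg. \<forall>m\<in>hom Mg. sm r m \<in> P \<longrightarrow> m \<in> P \<or> r \<in> colon sm P)"

text \<open>Gr_M(K): intersection of graded prime submodules containing K
  (the empty intersection is M = UNIV)\<close>
definition GrM ::
  "('g \<Rightarrow> 'r::comm_ring_1 set) \<Rightarrow> ('g \<Rightarrow> 'm::ab_group_add set)
    \<Rightarrow> ('r \<Rightarrow> 'm \<Rightarrow> 'm) \<Rightarrow> 'm set \<Rightarrow> 'm set" where
  "GrM Rg Mg sm K = \<Inter>{P. graded_prime_submodule Rg Mg sm P \<and> K \<subseteq> P}"

definition graded_primeful ::
  "('g \<Rightarrow> 'r::comm_ring_1 set) \<Rightarrow> ('g \<Rightarrow> 'm::ab_group_add set)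
    \<Rightarrow> ('r \<Rightarrow> 'm \<Rightarrow> 'm) \<Rightarrow> 'm set \<Rightarrow> bool" where
  "graded_primeful Rg Mg sm K \<longleftrightarrow>
     (\<forall>p. graded_prime_ideal Rg p \<and> colon sm K \<subseteq> p \<longrightarrow>
        (\<exists>P. graded_prime_submodule Rg Mg sm P \<and> K \<subseteq> P \<and> colon sm P = p))"

definition graded_quasi_primary ::
  "('g \<Rightarrow> 'r::comm_ring_1 set) \<Rightarrow> ('g \<Rightarrow> 'm::ab_group_add set)
    \<Rightarrow> ('r \<Rightarrow> 'm \<Rightarrow> 'm) \<Rightarrow> 'm set \<Rightarrow> bool" where
  "graded_quasi_primary Rg Mg sm Q \<longleftrightarrow>
     graded_submodule Mg sm Q \<and> Q \<noteq> UNIV \<and>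
     (\<forall>r\<in>hom Rg. \<forall>m\<in>hom Mg. sm r m \<in> Q \<longrightarrow>
        r \<in> graded_radical Rg (colon sm Q) \<or> m \<in> GrM Rg Mg sm Q)"

definition qpSpec ::
  "('g \<Rightarrow> 'r::comm_ring_1 set) \<Rightarrow> ('g \<Rightarrow> 'm::ab_group_add set)
    \<Rightarrow> ('r \<Rightarrow> 'm \<Rightarrow> 'm) \<Rightarrow> 'm set set" where
  "qpSpec Rg Mg sm = {Q. graded_quasi_primary Rg Mg sm Q \<and> graded_primeful Rg Mg sm Q}"

definition qpSpec_at ::
  "('g \<Rightarrow> 'r::comm_ring_1 set) \<Rightarrow> ('g \<Rightarrow> 'm::ab_group_add set)
    \<Rightarrow> ('r \<Rightarrow> 'm \<Rightarrow> 'm) \<Rightarrow> 'r set \<Rightarrow> 'm set set" where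
  "qpSpec_at Rg Mg sm p = {Q \<in> qpSpec Rg Mg sm. graded_radical Rg (colon sm Q) = p}"

definition qpV ::
  "('g \<Rightarrow> 'r::comm_ring_1 set) \<Rightarrow> ('g \<Rightarrow> 'm::ab_group_add set)
    \<Rightarrow> ('r \<Rightarrow> 'm \<Rightarrow> 'm) \<Rightarrow> 'm set \<Rightarrow> 'm set set" where
  "qpV Rg Mg sm K = {Q \<in> qpSpec Rg Mg sm.
      graded_radical Rg (colon sm K) \<subseteq> graded_radical Rg (colon sm Q)}"

definition qp_closed ::
  "('g \<Rightarrow> 'r::comm_ring_1 set) \<Rightarrow> ('g \<Rightarrow> 'm::ab_group_add set)
    \<Rightarrow> ('r \<Rightarrow> 'm \<Rightarrow> 'm) \<Rightarrow> 'm set set \<Rightarrow> bool" where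
  "qp_closed Rg Mg sm C \<longleftrightarrow> (\<exists>K. graded_submodule Mg sm K \<and> C = qpV Rg Mg sm K)"

text \<open>T0 axiom for the quasi-Zariski topology, phrased with closed sets
  (complements of open sets): any two distinct points are separated by a
  closed set containing exactly one of them.\<close>
definition qp_T0 ::
  "('g \<Rightarrow> 'r::comm_ring_1 set) \<Rightarrow> ('g \<Rightarrow> 'm::ab_group_add set)
    \<Rightarrow> ('r \<Rightarrow> 'm \<Rightarrow> 'm) \<Rightarrow> bool" where
  "qp_T0 Rg Mg sm \<longleftrightarrow>
     (\<forall>Q\<in>qpSpec Rg Mg sm. \<forall>P\<in>qpSpec Rg Mg sm. Q \<noteq> P \<longrightarrow>
        (\<exists>C. qp_closed Rg Mg sm C \<and> (Q \<in> C \<longleftrightarrow> P \<notin> C)))"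

text \<open>the natural map phi: Q \<mapsto> (Gr_M(Q) :_R M) / Ann(M), the quotient ideal
  represented as the set of its cosets r + Ann(M)\<close>
definition qp_phi ::
  "('g \<Rightarrow> 'r::comm_ring_1 set) \<Rightarrow> ('g \<Rightarrow> 'm::ab_group_add set)
    \<Rightarrow> ('r \<Rightarrow> 'm \<Rightarrow> 'm) \<Rightarrow> 'm set \<Rightarrow> 'r set set" where
  "qp_phi Rg Mg sm Q =
     (\<lambda>r. {r + a | a. a \<in> Ann sm}) ` colon sm (GrM Rg Mg sm Q)"

end

(*
  All four conditions say that Q \<mapsto> Gr((Q :_R M)) is injective on qp.Spec_g(M).
  A closed set qp-V(K) contains Q iff Gr((K :_R M)) \<subseteq> Gr((Q :_R M)), so it sees Q only
  through this radical, and qp-V(Q) or qp-V(P) separates two points whose radicals differ.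
  For (3) the radical must be a graded prime ideal: primefulness identifies (Gr_M(Q) :_R M) with
  the intersection of the graded primes over (Q :_R M), which is Gr((Q :_R M)) by a Zorn
  argument, and quasi-primariness of Q makes it prime.  For (4), phi(Q) consists of the cosets
  of (Gr_M(Q) :_R M) = Gr((Q :_R M)), an ideal containing Ann(M), so phi(Q) determines it.
*)
theory Submission
  imports Defs
begin

section \<open>Finitely supported decompositions\<close>

lemma gsum_eq_sum:
  assumes "finite F" "{g. c g \<noteq> 0} \<subseteq> F"
  shows "gsum c = sum c F"
  unfolding gsum_def using assms by (intro sum.mono_neutral_left) auto

lemma finsupp_add:
  "finsupp c \<Longrightarrow> finsupp d \<Longrightarrow> finsupp (\<lambda>g. c g + d g :: 'a::monoid_add)"
  unfolding finsupp_def
  by (rule finite_subset[of _ "{g. c g \<noteq> 0} \<union> {g. d g \<noteq> 0}"]) auto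

lemma gsum_add:
  assumes "finsupp c" "finsupp d"
  shows "gsum (\<lambda>g. c g + d g) = gsum c + gsum d"
proof -
  let ?F = "{g. c g \<noteq> 0} \<union> {g. d g \<noteq> 0}"
  have F: "finite ?F" using assms unfolding finsupp_def by auto
  have "gsum (\<lambda>g. c g + d g) = sum (\<lambda>g. c g + d g) ?F"
    using F by (rule gsum_eq_sum) auto
  also have "\<dots> = sum c ?F + sum d ?F" by (rule sum.distrib)
  also have "\<dots> = gsum c + gsum d" using F by (simp add: gsum_eq_sum[of ?F])
  finally show ?thesis .
qed

definition single :: "'g \<Rightarrow> 'a::zero \<Rightarrow> 'g \<Rightarrow> 'a" where
  "single h x = (\<lambda>g. if g = h then x else 0)"

lemma finsupp_single: "finsupp (single h x)"
  unfolding finsupp_def single_def by (rule finite_subset[of _ "{h}"]) auto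

lemma gsum_single: "gsum (single h (x::'a::comm_monoid_add)) = x"
proof -
  have "gsum (single h x) = sum (single h x) {h}"
    by (rule gsum_eq_sum) (auto simp: single_def)
  then show ?thesis by (simp add: single_def)
qed

lemma additive_gsum_shift:
  fixes c :: "'g::group_add \<Rightarrow> 'a::comm_monoid_add" and f :: "'a \<Rightarrow> 'b::comm_monoid_add"
  assumes add: "\<And>x y. f (x + y) = f x + f y" and zero: "f 0 = 0"
    and deg: "\<And>g a. a \<in> A g \<Longrightarrow> f a \<in> B (g + h)"
    and c: "finsupp c" "\<forall>g. c g \<in> A g"
  shows "finsupp (\<lambda>k. f (c (k - h)))" and "\<forall>k. f (c (k - h)) \<in> B k"
    and "f (gsum c) = gsum (\<lambda>k. f (c (k - h)))"
proof -
  let ?d = "\<lambda>k. f (c (k - h))"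
  let ?S = "{g. c g \<noteq> 0}"
  have S: "finite ?S" using c(1) unfolding finsupp_def .
  have supp: "{k. ?d k \<noteq> 0} \<subseteq> (\<lambda>g. g + h) ` ?S"
  proof
    fix k assume "k \<in> {k. ?d k \<noteq> 0}"
    then have "k - h \<in> ?S" using zero by auto
    then show "k \<in> (\<lambda>g. g + h) ` ?S" by (rule rev_image_eqI) simp
  qed
  show "finsupp ?d" unfolding finsupp_def using finite_subset[OF supp] S by blast
  show "\<forall>k. ?d k \<in> B k" using deg[of "c (k - h)" "k - h" for k] c(2) by simp
  have "gsum ?d = sum ?d ((\<lambda>g. g + h) ` ?S)" using S supp by (intro gsum_eq_sum) simp_all
  also have "\<dots> = sum (f \<circ> c) ?S" by (subst sum.reindex) (auto simp: inj_on_def)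
  also have "\<dots> = f (gsum c)" unfolding gsum_def using zero add by (rule sum_comp_morphism)
  finally show "f (gsum c) = gsum ?d" ..
qed

lemma direct_decomp_unique:
  assumes "direct_decomp A" "finsupp c" "\<forall>g. c g \<in> A g" "finsupp d" "\<forall>g. d g \<in> A g"
    and "gsum c = gsum d"
  shows "c = d"
  using assms unfolding direct_decomp_def by metis

lemma direct_decompE:
  assumes "direct_decomp A"
  obtains c where "finsupp c" "\<forall>g. c g \<in> A g" "x = gsum c"
  using assms unfolding direct_decomp_def by metis

lemma direct_decomp_homogeneous:
  assumes "direct_decomp A" "\<forall>g. 0 \<in> A g" "x \<in> A h"
    and "finsupp c" "\<forall>g. c g \<in> A g" "x = gsum c"
  shows "c = single h x"
proof (rule direct_decomp_unique[OF assms(1,4,5) finsupp_single])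
  show "\<forall>g. single h x g \<in> A g" using assms(2,3) by (simp add: single_def)
  show "gsum c = gsum (single h x)" using assms(6) by (simp add: gsum_single)
qed

lemma direct_decomp_component_mem:
  assumes "direct_decomp A" "finsupp c" "\<forall>g. c g \<in> A g"
    and "finsupp e" "\<forall>g. e g \<in> A g \<inter> N" "gsum c = gsum e"
  shows "c g \<in> N"
proof -
  have "c = e" using assms by (intro direct_decomp_unique[OF assms(1)]) auto
  then show ?thesis using assms(5) by blast
qed

section \<open>Additive subgroups, graded ideals and graded submodules\<close>

lemma add_subgroup_zero: "add_subgroup S \<Longrightarrow> 0 \<in> S"
  by (simp add: add_subgroup_def)

lemma add_subgroup_add: "add_subgroup S \<Longrightarrow> x \<in> S \<Longrightarrow> y \<in> S \<Longrightarrow> x + y \<in> S"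
  by (simp add: add_subgroup_def)

lemma add_subgroup_diff: "add_subgroup S \<Longrightarrow> x \<in> S \<Longrightarrow> y \<in> S \<Longrightarrow> x - y \<in> S"
  by (simp add: add_subgroup_def)

lemma add_subgroup_sum: "add_subgroup S \<Longrightarrow> (\<And>x. x \<in> F \<Longrightarrow> f x \<in> S) \<Longrightarrow> sum f F \<in> S"
  by (induction F rule: infinite_finite_induct) (simp_all add: add_subgroup_zero add_subgroup_add)

lemma add_subgroup_gsum: "add_subgroup S \<Longrightarrow> (\<And>g. c g \<in> S) \<Longrightarrow> gsum c \<in> S"
  unfolding gsum_def by (rule add_subgroup_sum)

lemma add_subgroup_Inter:
  "(\<And>S. S \<in> F \<Longrightarrow> add_subgroup S) \<Longrightarrow> add_subgroup (\<Inter>F)"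
  unfolding add_subgroup_def by blast

lemma add_subgroup_add_principal:
  fixes a :: "'a::comm_ring"
  assumes J: "add_subgroup J"
  shows "add_subgroup {j + r * a | j r. j \<in> J}"
  unfolding add_subgroup_def
proof (intro conjI ballI)
  show "0 \<in> {j + r * a | j r. j \<in> J}" using add_subgroup_zero[OF J] by (auto intro!: exI[of _ 0])
next
  fix x y assume "x \<in> {j + r * a | j r. j \<in> J}" "y \<in> {j + r * a | j r. j \<in> J}"
  then obtain j1 r1 j2 r2 where xy: "x = j1 + r1 * a" "y = j2 + r2 * a" "j1 \<in> J" "j2 \<in> J"
    by blast
  have "x + y = (j1 + j2) + (r1 + r2) * a" "x - y = (j1 - j2) + (r1 - r2) * a"
    using xy by (simp_all add: algebra_simps)
  moreover have "j1 + j2 \<in> J" "j1 - j2 \<in> J"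
    using xy J by (simp_all add: add_subgroup_add add_subgroup_diff)
  ultimately show "x + y \<in> {j + r * a | j r. j \<in> J}" "x - y \<in> {j + r * a | j r. j \<in> J}"
    by blast+
qed

lemma graded_ideal_add_subgroup: "graded_ideal Rg I \<Longrightarrow> add_subgroup I"
  unfolding graded_ideal_def by blast

lemma graded_ideal_mult: "graded_ideal Rg I \<Longrightarrow> x \<in> I \<Longrightarrow> r * x \<in> I"
  unfolding graded_ideal_def by blast

lemma graded_ideal_components:
  "graded_ideal Rg I \<Longrightarrow> x \<in> I \<Longrightarrow> \<exists>c. finsupp c \<and> (\<forall>g. c g \<in> Rg g \<inter> I) \<and> x = gsum c"
  unfolding graded_ideal_def by blast

lemma graded_submodule_add_subgroup: "graded_submodule Mg sm N \<Longrightarrow> add_subgroup N"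
  unfolding graded_submodule_def by blast

lemma graded_submodule_smult: "graded_submodule Mg sm N \<Longrightarrow> x \<in> N \<Longrightarrow> sm r x \<in> N"
  unfolding graded_submodule_def by blast

lemma graded_submodule_components:
  "graded_submodule Mg sm N \<Longrightarrow> x \<in> N \<Longrightarrow> \<exists>c. finsupp c \<and> (\<forall>g. c g \<in> Mg g \<inter> N) \<and> x = gsum c"
  unfolding graded_submodule_def by blast

section \<open>Graded radicals\<close>

locale gr_ring =
  fixes Rg :: "'g::group_add \<Rightarrow> 'r::comm_ring_1 set"
  assumes graded_ring: "graded_ring Rg"
begin

lemma add_subgroup_Rg: "add_subgroup (Rg g)"
  using graded_ring unfolding graded_ring_def by blast

lemma zero_Rg: "0 \<in> Rg g"
  using add_subgroup_Rg by (rule add_subgroup_zero)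

lemma mult_Rg: "a \<in> Rg g \<Longrightarrow> b \<in> Rg h \<Longrightarrow> a * b \<in> Rg (g + h)"
  using graded_ring unfolding graded_ring_def by blast

lemma direct_decomp_Rg: "direct_decomp Rg"
  using graded_ring unfolding graded_ring_def by blast

lemma hom_mult: "a \<in> hom Rg \<Longrightarrow> b \<in> hom Rg \<Longrightarrow> a * b \<in> hom Rg"
  unfolding hom_def using mult_Rg by blast

lemma hom_power:
  assumes "a \<in> hom Rg"
  shows "n > 0 \<Longrightarrow> a ^ n \<in> hom Rg"
  by (induction n rule: nat_induct_non_zero) (simp_all add: assms hom_mult)

lemma graded_prime_ideal_power_mem:
  assumes p: "graded_prime_ideal Rg p" and a: "a \<in> hom Rg"
  shows "n > 0 \<Longrightarrow> a ^ n \<in> p \<Longrightarrow> a \<in> p"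
proof (induction n rule: nat_induct_non_zero)
  case (Suc n)
  then have "a * a ^ n \<in> p" by simp
  then show ?case
    using p a hom_power[OF a \<open>n > 0\<close>] Suc.IH unfolding graded_prime_ideal_def by blast
qed simp

lemma graded_radical_subset_prime:
  assumes "I \<subseteq> p" and p: "graded_prime_ideal Rg p"
  shows "graded_radical Rg I \<subseteq> p"
proof
  fix x assume "x \<in> graded_radical Rg I"
  then obtain c where c: "finsupp c" "\<forall>g. c g \<in> Rg g" "x = gsum c" "\<forall>g. \<exists>n>0. c g ^ n \<in> I"
    unfolding graded_radical_def by blast
  have "c g \<in> p" for g
  proof -
    obtain n where "n > 0" "c g ^ n \<in> p" using c(4) \<open>I \<subseteq> p\<close> by blast
    moreover have "c g \<in> hom Rg" using c(2) unfolding hom_def by blast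
    ultimately show ?thesis using graded_prime_ideal_power_mem[OF p] by blast
  qed
  moreover have "add_subgroup p"
    using p unfolding graded_prime_ideal_def by (blast intro: graded_ideal_add_subgroup)
  ultimately show "x \<in> p" using c(3) by (simp add: add_subgroup_gsum)
qed

lemma graded_ideal_add_principal:
  assumes J: "graded_ideal Rg J" and a: "a \<in> hom Rg"
  shows "graded_ideal Rg {j + r * a | j r. j \<in> J}"
proof -
  let ?Ja = "{j + r * a | j r. j \<in> J}"
  have "add_subgroup ?Ja" using graded_ideal_add_subgroup[OF J] by (rule add_subgroup_add_principal)
  moreover have "t * y \<in> ?Ja" if "y \<in> ?Ja" for t y
  proof -
    obtain j r where "y = j + r * a" "j \<in> J" using \<open>y \<in> ?Ja\<close> by blast
    then have "t * y = t * j + (t * r) * a" "t * j \<in> J"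
      using graded_ideal_mult[OF J] by (auto simp: algebra_simps)
    then show ?thesis by blast
  qed
  moreover have "\<exists>c. finsupp c \<and> (\<forall>g. c g \<in> Rg g \<inter> ?Ja) \<and> y = gsum c" if "y \<in> ?Ja" for y
  proof -
    obtain j r where y: "y = j + r * a" "j \<in> J" using \<open>y \<in> ?Ja\<close> by blast
    obtain e where e: "finsupp e" "\<forall>g. e g \<in> Rg g \<inter> J" "j = gsum e"
      using graded_ideal_components[OF J y(2)] by blast
    obtain h where ah: "a \<in> Rg h" using a unfolding hom_def by blast
    obtain c where c: "finsupp c" "\<forall>g. c g \<in> Rg g" "r = gsum c"
      using direct_decomp_Rg by (rule direct_decompE)
    note shift = additive_gsum_shift[where f = "\<lambda>x. x * a" and A = Rg and B = Rg and h = h,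
        OF distrib_right mult_zero_left mult_Rg[OF _ ah] c(1,2)]
    let ?f = "\<lambda>k. e k + c (k - h) * a"
    have "finsupp ?f" using finsupp_add e(1) shift(1) by blast
    moreover have "y = gsum ?f" using gsum_add[OF e(1) shift(1)] e(3) shift(3) y(1) c(3) by simp
    moreover have "\<forall>k. ?f k \<in> Rg k \<inter> ?Ja" using e(2) shift(2) add_subgroup_add[OF add_subgroup_Rg] by blast
    ultimately show ?thesis by blast
  qed
  ultimately show ?thesis unfolding graded_ideal_def by blast
qed

lemma graded_ideal_Union_chain:
  assumes "C \<noteq> {}" and chain: "\<forall>X\<in>C. \<forall>Y\<in>C. X \<subseteq> Y \<or> Y \<subseteq> X"
    and graded: "\<And>J. J \<in> C \<Longrightarrow> graded_ideal Rg J"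
  shows "graded_ideal Rg (\<Union>C)"
proof -
  have "add_subgroup (\<Union>C)"
    unfolding add_subgroup_def
  proof (intro conjI ballI)
    show "0 \<in> \<Union>C"
      using \<open>C \<noteq> {}\<close> graded graded_ideal_add_subgroup add_subgroup_zero by blast
  next
    fix u v assume "u \<in> \<Union>C" "v \<in> \<Union>C"
    then obtain J where "J \<in> C" "u \<in> J" "v \<in> J" using chain by blast
    then show "u + v \<in> \<Union>C" "u - v \<in> \<Union>C"
      using graded graded_ideal_add_subgroup add_subgroup_add add_subgroup_diff by blast+
  qed
  moreover have "\<forall>r. \<forall>u\<in>\<Union>C. r * u \<in> \<Union>C" using graded graded_ideal_mult by blast
  moreover have "\<exists>c. finsupp c \<and> (\<forall>g. c g \<in> Rg g \<inter> \<Union>C) \<and> u = gsum c" if "u \<in> \<Union>C" for u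
  proof -
    obtain J where "J \<in> C" "u \<in> J" using \<open>u \<in> \<Union>C\<close> by blast
    then show ?thesis using graded graded_ideal_components by blast
  qed
  ultimately show ?thesis unfolding graded_ideal_def by blast
qed

lemma graded_prime_if_maximal_avoiding_powers:
  assumes J: "graded_ideal Rg J" and avoid: "\<forall>n>0. x ^ n \<notin> J"
    and maximal: "\<And>K. graded_ideal Rg K \<Longrightarrow> J \<subseteq> K \<Longrightarrow> \<forall>n>0. x ^ n \<notin> K \<Longrightarrow> K = J"
  shows "graded_prime_ideal Rg J"
proof -
  have JS: "add_subgroup J" using J by (rule graded_ideal_add_subgroup)
  have power_mod: "\<exists>n>0. \<exists>j r. j \<in> J \<and> x ^ n = j + r * a" if a: "a \<in> hom Rg" "a \<notin> J" for a
  proof (rule ccontr)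
    assume no_power: "\<not> ?thesis"
    let ?Ja = "{j + r * a | j r. j \<in> J}"
    have "J \<subseteq> ?Ja" by (force intro: exI[of _ 0])
    moreover have "a \<in> ?Ja" using add_subgroup_zero[OF JS] by (force intro: exI[of _ 1])
    moreover have "graded_ideal Rg ?Ja" using J a(1) by (rule graded_ideal_add_principal)
    ultimately show False using maximal no_power a(2) by blast
  qed
  have "u \<in> J \<or> v \<in> J" if u: "u \<in> hom Rg" and v: "v \<in> hom Rg" and uv: "u * v \<in> J" for u v
  proof (rule ccontr)
    assume "\<not> ?thesis"
    then obtain n j1 r m j2 s where nm: "n > 0" "j1 \<in> J" "x ^ n = j1 + r * u"
      "m > 0" "j2 \<in> J" "x ^ m = j2 + s * v" using power_mod u v by metis
    have "x ^ (n + m) = (j2 + s * v) * j1 + (r * u) * j2 + (r * s) * (u * v)"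
      using nm by (simp add: power_add algebra_simps)
    also have "\<dots> \<in> J"
      using graded_ideal_mult[OF J] nm(2,5) uv add_subgroup_add[OF JS] by simp
    finally show False using avoid nm(1) by simp
  qed
  moreover have "J \<noteq> UNIV" using avoid by (metis UNIV_I power_one_right zero_less_one)
  ultimately show ?thesis unfolding graded_prime_ideal_def using J by blast
qed

lemma graded_prime_avoiding_powers:
  assumes I: "graded_ideal Rg I" and avoid: "\<forall>n>0. x ^ n \<notin> I"
  obtains p where "graded_prime_ideal Rg p" "I \<subseteq> p" "x \<notin> p"
proof -
  define F where "F = {J. graded_ideal Rg J \<and> I \<subseteq> J \<and> (\<forall>n>0. x ^ n \<notin> J)}"
  have "\<exists>J\<in>F. \<forall>K\<in>F. J \<subseteq> K \<longrightarrow> K = J"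
  proof (rule subset_Zorn_nonempty)
    show "F \<noteq> {}" using I avoid unfolding F_def by blast
  next
    fix C assume "C \<noteq> {}" "subset.chain F C"
    then have "C \<subseteq> F" "\<forall>X\<in>C. \<forall>Y\<in>C. X \<subseteq> Y \<or> Y \<subseteq> X"
      unfolding subset_chain_def by blast+
    then have "graded_ideal Rg (\<Union>C)"
      using \<open>C \<noteq> {}\<close> by (intro graded_ideal_Union_chain) (auto simp: F_def)
    then show "\<Union>C \<in> F" using \<open>C \<noteq> {}\<close> \<open>C \<subseteq> F\<close> unfolding F_def by blast
  qed
  then obtain J where "J \<in> F" and maximal: "\<And>K. K \<in> F \<Longrightarrow> J \<subseteq> K \<Longrightarrow> K = J" by blast
  then have J: "graded_ideal Rg J" "I \<subseteq> J" "\<forall>n>0. x ^ n \<notin> J" unfolding F_def by blast+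
  have "graded_prime_ideal Rg J"
    using J(1,3) by (rule graded_prime_if_maximal_avoiding_powers) (use J(2) maximal F_def in auto)
  moreover have "x \<notin> J" using J(3) by (metis power_one_right zero_less_one)
  ultimately show ?thesis using that J(2) by blast
qed

lemma graded_radical_eq_Inter_primes:
  assumes I: "graded_ideal Rg I"
  shows "graded_radical Rg I = \<Inter>{p. graded_prime_ideal Rg p \<and> I \<subseteq> p}"
proof
  show "graded_radical Rg I \<subseteq> \<Inter>{p. graded_prime_ideal Rg p \<and> I \<subseteq> p}"
    using graded_radical_subset_prime by blast
next
  show "\<Inter>{p. graded_prime_ideal Rg p \<and> I \<subseteq> p} \<subseteq> graded_radical Rg I"
  proof
    fix x assume x: "x \<in> \<Inter>{p. graded_prime_ideal Rg p \<and> I \<subseteq> p}"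
    obtain c where c: "finsupp c" "\<forall>g. c g \<in> Rg g" "x = gsum c"
      using direct_decomp_Rg by (rule direct_decompE)
    have "\<exists>n>0. c g ^ n \<in> I" for g
    proof (rule ccontr)
      assume "\<not> ?thesis"
      then obtain p where p: "graded_prime_ideal Rg p" "I \<subseteq> p" "c g \<notin> p"
        using graded_prime_avoiding_powers[OF I] by blast
      obtain e where "finsupp e" "\<forall>g. e g \<in> Rg g \<inter> p" "x = gsum e"
        using p(1,2) x graded_ideal_components unfolding graded_prime_ideal_def by blast
      then have "c g \<in> p" using c by (intro direct_decomp_component_mem[OF direct_decomp_Rg]) auto
      then show False using p(3) by blast
    qed
    then show "x \<in> graded_radical Rg I" unfolding graded_radical_def using c by blast
  qed
qed

lemma graded_radical_homogeneous_power:
  assumes "y \<in> hom Rg" "y \<in> graded_radical Rg I"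
  shows "\<exists>n>0. y ^ n \<in> I"
proof -
  obtain h where h: "y \<in> Rg h" using assms(1) unfolding hom_def by blast
  obtain c where c: "finsupp c" "\<forall>g. c g \<in> Rg g" "y = gsum c" "\<forall>g. \<exists>n>0. c g ^ n \<in> I"
    using assms(2) unfolding graded_radical_def by blast
  have "c = single h y" using direct_decomp_Rg _ h c(1-3) by (rule direct_decomp_homogeneous) (simp add: zero_Rg)
  then show ?thesis using c(4) by (metis single_def)
qed

lemma graded_radical_power_mem:
  assumes "graded_ideal Rg I" "y \<in> hom Rg" "n > 0" "y ^ n \<in> graded_radical Rg I"
  shows "y \<in> graded_radical Rg I"
  using assms graded_prime_ideal_power_mem unfolding graded_radical_eq_Inter_primes[OF assms(1)] by blast

end

section \<open>Graded modules\<close>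

locale gr_module =
  fixes Rg :: "'g::group_add \<Rightarrow> 'r::comm_ring_1 set"
    and Mg :: "'g \<Rightarrow> 'm::ab_group_add set"
    and sm :: "'r \<Rightarrow> 'm \<Rightarrow> 'm"
  assumes graded_module: "graded_module Rg Mg sm"

sublocale gr_module \<subseteq> gr_ring Rg
  using graded_module unfolding graded_module_def by unfold_locales blast

context gr_module
begin

lemma smult_add_left: "sm (a + b) m = sm a m + sm b m"
  using graded_module unfolding graded_module_def module_action_def by blast

lemma smult_add_right: "sm a (m + n) = sm a m + sm a n"
  using graded_module unfolding graded_module_def module_action_def by blast

lemma smult_mult: "sm (a * b) m = sm a (sm b m)"
  using graded_module unfolding graded_module_def module_action_def by blast

lemma smult_one: "sm 1 m = m"
  using graded_module unfolding graded_module_def module_action_def by blast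

lemma smult_zero_left [simp]: "sm 0 m = 0"
  using smult_add_left[of 0 0 m] by simp

lemma smult_zero_right [simp]: "sm a 0 = 0"
  using smult_add_right[of a 0 0] by simp

lemma smult_diff_left: "sm (a - b) m = sm a m - sm b m"
  using smult_add_left[of "a - b" b m] by (simp add: algebra_simps)

lemma smult_sum_right: "sm r (sum f F) = (\<Sum>x\<in>F. sm r (f x))"
  by (induction F rule: infinite_finite_induct) (auto simp: smult_add_right)

lemma smult_Mg: "a \<in> Rg g \<Longrightarrow> m \<in> Mg h \<Longrightarrow> sm a m \<in> Mg (g + h)"
  using graded_module unfolding graded_module_def by blast

lemma direct_decomp_Mg: "direct_decomp Mg"
  using graded_module unfolding graded_module_def by blast

lemma hom_smult: "a \<in> hom Rg \<Longrightarrow> m \<in> hom Mg \<Longrightarrow> sm a m \<in> hom Mg"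
  unfolding hom_def using smult_Mg by blast

lemma mem_colon_if_hom:
  assumes N: "add_subgroup N" and hom: "\<And>m. m \<in> hom Mg \<Longrightarrow> sm r m \<in> N"
  shows "r \<in> colon sm N"
  unfolding colon_def mem_Collect_eq
proof
  fix m
  obtain f where f: "finsupp f" "\<forall>g. f g \<in> Mg g" "m = gsum f"
    using direct_decomp_Mg by (rule direct_decompE)
  have "sm r m = (\<Sum>g | f g \<noteq> 0. sm r (f g))"
    unfolding f(3) gsum_def smult_sum_right ..
  also have "\<dots> \<in> N" using N by (rule add_subgroup_sum) (use hom f(2) in \<open>auto simp: hom_def\<close>)
  finally show "sm r m \<in> N" .
qed

lemma graded_ideal_colon:
  assumes N: "graded_submodule Mg sm N"
  shows "graded_ideal Rg (colon sm N)"
proof -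
  have NS: "add_subgroup N" using N by (rule graded_submodule_add_subgroup)
  have "add_subgroup (colon sm N)"
    unfolding add_subgroup_def colon_def
    using NS by (auto simp: smult_add_left smult_diff_left add_subgroup_zero add_subgroup_add add_subgroup_diff)
  moreover have "\<forall>r. \<forall>x\<in>colon sm N. r * x \<in> colon sm N"
    unfolding colon_def using graded_submodule_smult[OF N] by (simp add: smult_mult mult.commute[of _ r for r])
  moreover have "\<exists>c. finsupp c \<and> (\<forall>g. c g \<in> Rg g \<inter> colon sm N) \<and> x = gsum c"
    if x: "x \<in> colon sm N" for x
  proof -
    obtain c where c: "finsupp c" "\<forall>g. c g \<in> Rg g" "x = gsum c"
      using direct_decomp_Rg by (rule direct_decompE)
    have "c g \<in> colon sm N" for g
    proof (rule mem_colon_if_hom[OF NS])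
      fix m assume "m \<in> hom Mg"
      then obtain h where h: "m \<in> Mg h" unfolding hom_def by blast
      note shift = additive_gsum_shift[where f = "\<lambda>a. sm a m" and A = Rg and B = Mg and h = h,
          OF smult_add_left smult_zero_left smult_Mg[OF _ h] c(1,2)]
      obtain e where "finsupp e" "\<forall>g. e g \<in> Mg g \<inter> N" "sm x m = gsum e"
        using x graded_submodule_components[OF N] unfolding colon_def by blast
      then have "sm (c ((g + h) - h)) m \<in> N"
        using shift c(3) by (intro direct_decomp_component_mem[OF direct_decomp_Mg]) auto
      then show "sm (c g) m \<in> N" by simp
    qed
    then show ?thesis using c by blast
  qed
  ultimately show ?thesis unfolding graded_ideal_def by blast
qed

lemma graded_prime_ideal_colon:
  assumes P: "graded_prime_submodule Rg Mg sm P"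
  shows "graded_prime_ideal Rg (colon sm P)"
proof -
  have P_graded: "graded_submodule Mg sm P" and "P \<noteq> UNIV"
    and P_prime: "\<And>r m. r \<in> hom Rg \<Longrightarrow> m \<in> hom Mg \<Longrightarrow> sm r m \<in> P \<Longrightarrow> m \<in> P \<or> r \<in> colon sm P"
    using P unfolding graded_prime_submodule_def by blast+
  have "1 \<notin> colon sm P" using \<open>P \<noteq> UNIV\<close> unfolding colon_def by (auto simp: smult_one)
  moreover have "b \<in> colon sm P"
    if "a \<in> hom Rg" "b \<in> hom Rg" "a * b \<in> colon sm P" "a \<notin> colon sm P" for a b
  proof (rule mem_colon_if_hom[OF graded_submodule_add_subgroup[OF P_graded]])
    fix m assume "m \<in> hom Mg"
    moreover have "sm a (sm b m) \<in> P" using that(3) unfolding colon_def by (simp add: smult_mult[symmetric])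
    ultimately show "sm b m \<in> P" using P_prime hom_smult that by blast
  qed
  ultimately show ?thesis
    unfolding graded_prime_ideal_def using graded_ideal_colon[OF P_graded] by blast
qed

lemma graded_submodule_GrM: "graded_submodule Mg sm (GrM Rg Mg sm K)"
proof -
  let ?F = "{P. graded_prime_submodule Rg Mg sm P \<and> K \<subseteq> P}"
  have graded: "\<And>P. P \<in> ?F \<Longrightarrow> graded_submodule Mg sm P"
    unfolding graded_prime_submodule_def by blast
  have "add_subgroup (\<Inter>?F)"
    using graded_submodule_add_subgroup[OF graded] by (rule add_subgroup_Inter)
  moreover have "\<forall>r. \<forall>x\<in>\<Inter>?F. sm r x \<in> \<Inter>?F"
    using graded_submodule_smult[OF graded] by blast
  moreover have "\<exists>c. finsupp c \<and> (\<forall>g. c g \<in> Mg g \<inter> \<Inter>?F) \<and> x = gsum c" if x: "x \<in> \<Inter>?F" for x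
  proof -
    obtain c where c: "finsupp c" "\<forall>g. c g \<in> Mg g" "x = gsum c"
      using direct_decomp_Mg by (rule direct_decompE)
    have "c g \<in> P" if P: "P \<in> ?F" for P g
    proof -
      obtain e where "finsupp e" "\<forall>g. e g \<in> Mg g \<inter> P" "x = gsum e"
        using graded_submodule_components[OF graded[OF P]] x P by blast
      then show ?thesis using c by (intro direct_decomp_component_mem[OF direct_decomp_Mg]) auto
    qed
    then show ?thesis using c by blast
  qed
  ultimately show ?thesis unfolding GrM_def graded_submodule_def by blast
qed

lemma colon_GrM:
  assumes Q: "graded_submodule Mg sm Q" and primeful: "graded_primeful Rg Mg sm Q"
  shows "colon sm (GrM Rg Mg sm Q) = graded_radical Rg (colon sm Q)"
proof -
  have "colon sm ` {P. graded_prime_submodule Rg Mg sm P \<and> Q \<subseteq> P}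
      = {p. graded_prime_ideal Rg p \<and> colon sm Q \<subseteq> p}"
  proof
    show "colon sm ` {P. graded_prime_submodule Rg Mg sm P \<and> Q \<subseteq> P}
      \<subseteq> {p. graded_prime_ideal Rg p \<and> colon sm Q \<subseteq> p}"
      using graded_prime_ideal_colon unfolding colon_def by blast
    show "{p. graded_prime_ideal Rg p \<and> colon sm Q \<subseteq> p}
      \<subseteq> colon sm ` {P. graded_prime_submodule Rg Mg sm P \<and> Q \<subseteq> P}"
      using primeful unfolding graded_primeful_def by blast
  qed
  moreover have "colon sm (\<Inter>F) = \<Inter>(colon sm ` F)" for F by (auto simp: colon_def)
  ultimately show ?thesis
    unfolding GrM_def graded_radical_eq_Inter_primes[OF graded_ideal_colon[OF Q]] by simp
qed

lemma qpSpecD: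
  assumes "Q \<in> qpSpec Rg Mg sm"
  shows "graded_submodule Mg sm Q" "Q \<noteq> UNIV" "graded_primeful Rg Mg sm Q"
    "\<And>r m. r \<in> hom Rg \<Longrightarrow> m \<in> hom Mg \<Longrightarrow> sm r m \<in> Q \<Longrightarrow>
        r \<in> graded_radical Rg (colon sm Q) \<or> m \<in> GrM Rg Mg sm Q"
  using assms unfolding qpSpec_def graded_quasi_primary_def by blast+

lemma graded_prime_ideal_radical_colon:
  assumes Q: "Q \<in> qpSpec Rg Mg sm"
  shows "graded_prime_ideal Rg (graded_radical Rg (colon sm Q))"
proof -
  let ?I = "colon sm Q"
  let ?G = "graded_radical Rg ?I"
  have I: "graded_ideal Rg ?I" using graded_ideal_colon[OF qpSpecD(1)[OF Q]] .
  have G: "?G = colon sm (GrM Rg Mg sm Q)" using colon_GrM[OF qpSpecD(1,3)[OF Q]] ..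
  have "1 \<notin> ?I" using qpSpecD(2)[OF Q] unfolding colon_def by (auto simp: smult_one)
  then obtain p where "graded_prime_ideal Rg p" "?I \<subseteq> p" "1 \<notin> p"
    using graded_prime_avoiding_powers[OF I, of 1] by auto
  then have "1 \<notin> ?G" using graded_radical_subset_prime by blast
  moreover have "b \<in> ?G" if a: "a \<in> hom Rg" and b: "b \<in> hom Rg" and "a * b \<in> ?G" "a \<notin> ?G" for a b
  proof -
    obtain n where n: "n > 0" "(a * b) ^ n \<in> ?I"
      using graded_radical_homogeneous_power[OF hom_mult[OF a b] \<open>a * b \<in> ?G\<close>] by blast
    have "a ^ n \<notin> ?G" using graded_radical_power_mem[OF I a n(1)] \<open>a \<notin> ?G\<close> by blast
    have "b ^ n \<in> colon sm (GrM Rg Mg sm Q)"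
    proof (rule mem_colon_if_hom[OF graded_submodule_add_subgroup[OF graded_submodule_GrM]])
      fix m assume m: "m \<in> hom Mg"
      have "sm (a ^ n) (sm (b ^ n) m) \<in> Q"
        using n(2) unfolding colon_def by (simp add: smult_mult[symmetric] power_mult_distrib)
      then show "sm (b ^ n) m \<in> GrM Rg Mg sm Q"
        using qpSpecD(4)[OF Q hom_power[OF a n(1)] hom_smult[OF hom_power[OF b n(1)] m]]
          \<open>a ^ n \<notin> ?G\<close> by blast
    qed
    then show ?thesis using graded_radical_power_mem[OF I b n(1)] G by simp
  qed
  moreover have "graded_ideal Rg ?G" using graded_ideal_colon[OF graded_submodule_GrM] G by simp
  ultimately show ?thesis unfolding graded_prime_ideal_def by blast
qed

lemma Union_qp_phi: "\<Union>(qp_phi Rg Mg sm K) = colon sm (GrM Rg Mg sm K)"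
proof -
  have "0 \<in> Ann sm" unfolding Ann_def colon_def by simp
  moreover have "r + a \<in> colon sm N" if "r \<in> colon sm N" "a \<in> Ann sm" for r a N
    using that unfolding colon_def Ann_def by (simp add: smult_add_left)
  ultimately show ?thesis unfolding qp_phi_def by fastforce
qed

end

section \<open>The quasi-Zariski topology on qp.Spec_g(M)\<close>

lemma inj_on_iff_same_kernel:
  assumes "\<And>x y. x \<in> S \<Longrightarrow> y \<in> S \<Longrightarrow> f x = f y \<longleftrightarrow> g x = g y"
  shows "inj_on f S \<longleftrightarrow> inj_on g S"
  using assms unfolding inj_on_def by blast

lemma inj_on_iff_fibres_card_le_1:
  assumes "f ` S \<subseteq> Y"
  shows "inj_on f S \<longleftrightarrow> (\<forall>y\<in>Y. finite {x\<in>S. f x = y} \<and> card {x\<in>S. f x = y} \<le> 1)"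
proof
  assume inj: "inj_on f S"
  show "\<forall>y\<in>Y. finite {x\<in>S. f x = y} \<and> card {x\<in>S. f x = y} \<le> 1"
  proof
    fix y
    let ?F = "{x\<in>S. f x = y}"
    have at_most_one: "\<forall>a\<in>?F. \<forall>b\<in>?F. a = b" using inj unfolding inj_on_def by blast
    have "finite ?F"
    proof (cases "?F = {}")
      case False
      then obtain x where "x \<in> ?F" by blast
      then have "?F \<subseteq> {x}" using at_most_one by blast
      then show ?thesis by (rule finite_subset) simp
    qed (metis finite.emptyI)
    moreover have "card ?F \<le> Suc 0" using card_le_Suc0_iff_eq[OF \<open>finite ?F\<close>] at_most_one by blast
    ultimately show "finite ?F \<and> card ?F \<le> 1" by simp
  qed
next
  assume fibres: "\<forall>y\<in>Y. finite {x\<in>S. f x = y} \<and> card {x\<in>S. f x = y} \<le> 1"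
  show "inj_on f S"
  proof (rule inj_onI)
    fix x x' assume "x \<in> S" "x' \<in> S" "f x = f x'"
    let ?F = "{z\<in>S. f z = f x}"
    have "f x \<in> Y" using assms \<open>x \<in> S\<close> by blast
    then have "finite ?F" "card ?F \<le> Suc 0" using fibres by simp_all
    then have "\<forall>a\<in>?F. \<forall>b\<in>?F. a = b" using card_le_Suc0_iff_eq by blast
    moreover have "x \<in> ?F" "x' \<in> ?F" using \<open>x \<in> S\<close> \<open>x' \<in> S\<close> \<open>f x = f x'\<close> by simp_all
    ultimately show "x = x'" by blast
  qed
qed

lemma mem_qpV_iff:
  "X \<in> qpV Rg Mg sm K \<longleftrightarrow>
     X \<in> qpSpec Rg Mg sm \<and> graded_radical Rg (colon sm K) \<subseteq> graded_radical Rg (colon sm X)"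
  unfolding qpV_def by blast

lemma qpV_eq_iff:
  assumes "Q \<in> qpSpec Rg Mg sm" "P \<in> qpSpec Rg Mg sm"
  shows "qpV Rg Mg sm Q = qpV Rg Mg sm P
    \<longleftrightarrow> graded_radical Rg (colon sm Q) = graded_radical Rg (colon sm P)"
proof
  assume "qpV Rg Mg sm Q = qpV Rg Mg sm P"
  moreover have "Q \<in> qpV Rg Mg sm Q" "P \<in> qpV Rg Mg sm P" using assms by (simp_all add: mem_qpV_iff)
  ultimately have "Q \<in> qpV Rg Mg sm P" "P \<in> qpV Rg Mg sm Q" by simp_all
  then show "graded_radical Rg (colon sm Q) = graded_radical Rg (colon sm P)"
    unfolding mem_qpV_iff by (blast intro: subset_antisym)
qed (simp add: qpV_def)

lemma inj_on_qpV_iff: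
  "inj_on (qpV Rg Mg sm) (qpSpec Rg Mg sm)
   \<longleftrightarrow> inj_on (\<lambda>Q. graded_radical Rg (colon sm Q)) (qpSpec Rg Mg sm)"
  by (rule inj_on_iff_same_kernel) (rule qpV_eq_iff)

lemma qp_T0_iff_inj_on_radical:
  "qp_T0 Rg Mg sm \<longleftrightarrow> inj_on (\<lambda>Q. graded_radical Rg (colon sm Q)) (qpSpec Rg Mg sm)"
proof
  assume T0: "qp_T0 Rg Mg sm"
  show "inj_on (\<lambda>Q. graded_radical Rg (colon sm Q)) (qpSpec Rg Mg sm)"
  proof (rule inj_onI, rule ccontr)
    fix Q P assume QP: "Q \<in> qpSpec Rg Mg sm" "P \<in> qpSpec Rg Mg sm" "Q \<noteq> P"
      and rad: "graded_radical Rg (colon sm Q) = graded_radical Rg (colon sm P)"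
    obtain K where "Q \<in> qpV Rg Mg sm K \<longleftrightarrow> P \<notin> qpV Rg Mg sm K"
      using T0 QP unfolding qp_T0_def qp_closed_def by blast
    then show False using QP(1,2) rad by (simp add: mem_qpV_iff)
  qed
next
  assume inj: "inj_on (\<lambda>Q. graded_radical Rg (colon sm Q)) (qpSpec Rg Mg sm)"
  show "qp_T0 Rg Mg sm"
    unfolding qp_T0_def
  proof (intro ballI impI)
    fix Q P assume QP: "Q \<in> qpSpec Rg Mg sm" "P \<in> qpSpec Rg Mg sm" "Q \<noteq> P"
    then have ne: "graded_radical Rg (colon sm Q) \<noteq> graded_radical Rg (colon sm P)"
      using inj unfolding inj_on_def by blast
    have closed: "qp_closed Rg Mg sm (qpV Rg Mg sm Q)" "qp_closed Rg Mg sm (qpV Rg Mg sm P)"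
      using QP unfolding qp_closed_def qpSpec_def graded_quasi_primary_def by blast+
    show "\<exists>C. qp_closed Rg Mg sm C \<and> (Q \<in> C \<longleftrightarrow> P \<notin> C)"
    proof (cases "graded_radical Rg (colon sm Q) \<subseteq> graded_radical Rg (colon sm P)")
      case True
      then have "Q \<in> qpV Rg Mg sm P \<longleftrightarrow> P \<notin> qpV Rg Mg sm P"
        using QP(1,2) ne by (auto simp: mem_qpV_iff)
      then show ?thesis using closed(2) by blast
    next
      case False
      then have "Q \<in> qpV Rg Mg sm Q \<longleftrightarrow> P \<notin> qpV Rg Mg sm Q"
        using QP(1,2) by (auto simp: mem_qpV_iff)
      then show ?thesis using closed(1) by blast
    qed
  qed
qed

context gr_module
begin

lemma card_qpSpec_at_le_1_iff:
  "(\<forall>p. graded_prime_ideal Rg p \<longrightarrow>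
      finite (qpSpec_at Rg Mg sm p) \<and> card (qpSpec_at Rg Mg sm p) \<le> 1)
   \<longleftrightarrow> inj_on (\<lambda>Q. graded_radical Rg (colon sm Q)) (qpSpec Rg Mg sm)"
proof -
  have "(\<lambda>Q. graded_radical Rg (colon sm Q)) ` qpSpec Rg Mg sm \<subseteq> {p. graded_prime_ideal Rg p}"
    using graded_prime_ideal_radical_colon by blast
  from inj_on_iff_fibres_card_le_1[OF this] show ?thesis
    unfolding qpSpec_at_def by simp
qed

lemma inj_on_qp_phi_iff:
  "inj_on (qp_phi Rg Mg sm) (qpSpec Rg Mg sm)
   \<longleftrightarrow> inj_on (\<lambda>Q. graded_radical Rg (colon sm Q)) (qpSpec Rg Mg sm)"
proof (rule inj_on_iff_same_kernel)
  fix Q P assume Q: "Q \<in> qpSpec Rg Mg sm" and P: "P \<in> qpSpec Rg Mg sm"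
  have "qp_phi Rg Mg sm Q = qp_phi Rg Mg sm P
      \<longleftrightarrow> colon sm (GrM Rg Mg sm Q) = colon sm (GrM Rg Mg sm P)"
  proof
    assume "qp_phi Rg Mg sm Q = qp_phi Rg Mg sm P"
    then show "colon sm (GrM Rg Mg sm Q) = colon sm (GrM Rg Mg sm P)" by (metis Union_qp_phi)
  qed (simp add: qp_phi_def)
  also have "\<dots> \<longleftrightarrow> graded_radical Rg (colon sm Q) = graded_radical Rg (colon sm P)"
    using colon_GrM[OF qpSpecD(1,3)[OF Q]] colon_GrM[OF qpSpecD(1,3)[OF P]] by simp
  finally show "qp_phi Rg Mg sm Q = qp_phi Rg Mg sm P
      \<longleftrightarrow> graded_radical Rg (colon sm Q) = graded_radical Rg (colon sm P)" .
qed

end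

theorem theorem4p3:
  fixes Rg :: "'g::group_add \<Rightarrow> 'r::comm_ring_1 set"
    and Mg :: "'g \<Rightarrow> 'm::ab_group_add set"
    and sm :: "'r \<Rightarrow> 'm \<Rightarrow> 'm"
  assumes "graded_module Rg Mg sm"
  shows "(qp_T0 Rg Mg sm
           \<longleftrightarrow> (\<forall>Q\<in>qpSpec Rg Mg sm. \<forall>P\<in>qpSpec Rg Mg sm.
                 qpV Rg Mg sm Q = qpV Rg Mg sm P \<longrightarrow> Q = P))
       \<and> (qp_T0 Rg Mg sm
           \<longleftrightarrow> (\<forall>p. graded_prime_ideal Rg p \<longrightarrow>
                 finite (qpSpec_at Rg Mg sm p) \<and> card (qpSpec_at Rg Mg sm p) \<le> 1))
       \<and> (qp_T0 Rg Mg sm \<longleftrightarrow> inj_on (qp_phi Rg Mg sm) (qpSpec Rg Mg sm))"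
proof -
  interpret gr_module Rg Mg sm using assms by unfold_locales
  have "(\<forall>Q\<in>qpSpec Rg Mg sm. \<forall>P\<in>qpSpec Rg Mg sm. qpV Rg Mg sm Q = qpV Rg Mg sm P \<longrightarrow> Q = P)
      \<longleftrightarrow> inj_on (qpV Rg Mg sm) (qpSpec Rg Mg sm)"
    by (simp only: inj_on_def)
  then show ?thesis
    unfolding qp_T0_iff_inj_on_radical inj_on_qpV_iff card_qpSpec_at_le_1_iff inj_on_qp_phi_iff
    by simp
qed

end
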